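(* Let $n\ge1$ be an integer and let $\phi:[0,\infty)\to(0,\infty)$ be differentiable and decreasing with $\phi(r)\to0$ as $r\to\infty$. Define $\widetilde\phi(r)=\min_{\delta>0}\big(\delta+\delta^{-2n}\phi(\delta^{2n+1}r)\big)$ for $r>0$, and let $t(r)$ be the unique solution $t$ of $t/\phi(t)=r$. Then $t(r)$ is differentiable and strictly increasing to $+\infty$, and $$\phi(t(r))^{\frac1{2n+1}}\le\widetilde\phi(r)\le 2\,\phi(t(r))^{\frac1{2n+1}},\qquad r>0.$$ *)

theory Defs
  imports "HOL-Analysis.Analysis"
begin

text \<open>The auxiliary function  phi~(r) = min over delta>0 of (delta + delta^(-2n) phi(delta^(2n+1) r)).
  The minimum is rendered as the infimum over delta > 0 (they agree whenever the minimum exists).\<close>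
definition phi_tilde :: "nat \<Rightarrow> (real \<Rightarrow> real) \<Rightarrow> real \<Rightarrow> real" where
  "phi_tilde n \<phi> r = (INF \<delta>\<in>{0<..}. \<delta> + \<phi> (\<delta> ^ (2*n+1) * r) / \<delta> ^ (2*n))"

definition t_sol :: "(real \<Rightarrow> real) \<Rightarrow> real \<Rightarrow> real" where
  "t_sol \<phi> r = (THE t. t \<ge> 0 \<and> t / \<phi> t = r)"

end

theory Submission
  imports Defs
begin

text \<open>The map \<open>g(t) = t / \<phi>(t)\<close> is a continuous strictly increasing bijection of \<open>[0,\<infinity>)\<close>
  onto itself, and \<open>g' = 1/\<phi> - t \<phi>'/\<phi>\<^sup>2 \<ge> 1/\<phi> > 0\<close> because \<open>\<phi>' \<le> 0\<close>; so \<open>t = g\<^sup>-\<^sup>1\<close>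
  is differentiable, strictly increasing and unbounded.
  For the bounds put \<open>c = \<phi>(t(r))\<^bsup>1/(2n+1)\<^esup>\<close>. The choice \<open>\<delta> = c\<close> makes
  \<open>\<delta>\<^bsup>2n+1\<^esup> r = t(r)\<close>, so both summands equal \<open>c\<close>. Conversely, for \<open>\<delta> \<ge> c\<close> the first
  summand is already \<open>\<ge> c\<close>, and for \<open>\<delta> < c\<close> monotonicity gives
  \<open>\<phi>(\<delta>\<^bsup>2n+1\<^esup> r) \<ge> \<phi>(t(r)) = c\<^bsup>2n+1\<^esup>\<close>, so the second summand is \<open>\<ge> c\<^bsup>2n+1\<^esup>/\<delta>\<^bsup>2n\<^esup> \<ge> c\<close>.\<close>

locale positive_decreasing =
  fixes \<phi> :: "real \<Rightarrow> real"
  assumes pos: "\<And>x. 0 \<le> x \<Longrightarrow> 0 < \<phi> x"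
    and decreasing: "\<And>x y. 0 \<le> x \<Longrightarrow> x \<le> y \<Longrightarrow> \<phi> y \<le> \<phi> x"
begin

lemma strict_mono_on_t_over_phi: "strict_mono_on {0..} (\<lambda>t. t / \<phi> t)"
proof (rule strict_mono_onI)
  fix a b :: real
  assume "a \<in> {0..}" "b \<in> {0..}" "a < b"
  then have "0 \<le> a" "a < b" by auto
  then have "0 < \<phi> b" "\<phi> b \<le> \<phi> a" using pos decreasing by auto
  with \<open>0 \<le> a\<close> have "a / \<phi> a \<le> a / \<phi> b" by (simp add: frac_le)
  also have "\<dots> < b / \<phi> b" using \<open>0 < \<phi> b\<close> \<open>a < b\<close> by (simp add: divide_strict_right_mono)
  finally show "a / \<phi> a < b / \<phi> b" .
qed

lemma t_sol_t_over_phi: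
  assumes "0 \<le> t"
  shows "t_sol \<phi> (t / \<phi> t) = t"
  unfolding t_sol_def
proof (rule the_equality)
  fix s assume "0 \<le> s \<and> s / \<phi> s = t / \<phi> t"
  with assms show "s = t"
    using strict_mono_on_imp_inj_on[OF strict_mono_on_t_over_phi] by (auto dest: inj_onD)
qed (use assms in auto)

lemma ex1_t_over_phi_eq:
  assumes cont: "continuous_on {0..} \<phi>" and "0 \<le> r"
  shows "\<exists>!t. 0 \<le> t \<and> t / \<phi> t = r"
proof (rule ex_ex1I)
  have "0 < \<phi> 0" using pos by simp
  then have "0 \<le> r * \<phi> 0" using \<open>0 \<le> r\<close> by simp
  then have "\<phi> (r * \<phi> 0) \<le> \<phi> 0" "0 < \<phi> (r * \<phi> 0)" using pos decreasing by auto
  \<comment> \<open>as \<open>\<phi> \<le> \<phi>(0)\<close>, the value \<open>r\<close> lies between those of \<open>t / \<phi> t\<close> at \<open>0\<close> and at \<open>r \<phi>(0)\<close>\<close>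
  then have "r \<le> (r * \<phi> 0) / \<phi> (r * \<phi> 0)"
    using \<open>0 \<le> r\<close> \<open>0 < \<phi> 0\<close> by (simp add: le_divide_eq mult_left_mono)
  moreover have "continuous_on {0 .. r * \<phi> 0} (\<lambda>t. t / \<phi> t)"
    using cont pos by (intro continuous_on_divide continuous_on_id continuous_on_subset[OF cont])
      (auto simp: less_imp_neq[OF pos, symmetric])
  ultimately show "\<exists>t. 0 \<le> t \<and> t / \<phi> t = r"
    using IVT'[of "\<lambda>t. t / \<phi> t" 0 r "r * \<phi> 0"] \<open>0 < \<phi> 0\<close> \<open>0 \<le> r\<close> by force
next
  fix s t assume "0 \<le> s \<and> s / \<phi> s = r" "0 \<le> t \<and> t / \<phi> t = r"
  then show "s = t"
    using strict_mono_on_imp_inj_on[OF strict_mono_on_t_over_phi] by (auto dest: inj_onD)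
qed

lemma t_sol_eq:
  assumes "continuous_on {0..} \<phi>" and "0 \<le> r"
  shows "0 \<le> t_sol \<phi> r" and "t_sol \<phi> r / \<phi> (t_sol \<phi> r) = r"
  using theI'[OF ex1_t_over_phi_eq[OF assms]] unfolding t_sol_def by auto

lemma strict_mono_on_t_sol:
  assumes "continuous_on {0..} \<phi>"
  shows "strict_mono_on {0..} (t_sol \<phi>)"
proof (rule strict_mono_onI)
  fix r s :: real
  assume "r \<in> {0..}" "s \<in> {0..}" "r < s"
  then have "t_sol \<phi> r / \<phi> (t_sol \<phi> r) < t_sol \<phi> s / \<phi> (t_sol \<phi> s)"
    using t_sol_eq[OF assms] by simp
  moreover have "0 \<le> t_sol \<phi> r" "0 \<le> t_sol \<phi> s"
    using t_sol_eq[OF assms] \<open>r \<in> {0..}\<close> \<open>s \<in> {0..}\<close> by auto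
  ultimately show "t_sol \<phi> r < t_sol \<phi> s"
    using strict_mono_on_less[OF strict_mono_on_t_over_phi] by simp
qed

lemma filterlim_t_sol_at_top:
  assumes "continuous_on {0..} \<phi>"
  shows "filterlim (t_sol \<phi>) at_top at_top"
  unfolding filterlim_at_top eventually_at_top_linorder
proof
  fix Z :: real
  define M where "M = max Z 0"
  have M_le: "M \<le> t_sol \<phi> r" if "M / \<phi> M \<le> r" for r
  proof -
    have "0 \<le> M / \<phi> M" using pos[of M] by (simp add: M_def)
    then have "t_sol \<phi> (M / \<phi> M) \<le> t_sol \<phi> r"
      using that strict_mono_on_leD[OF strict_mono_on_t_sol[OF assms]] by auto
    then show ?thesis by (simp add: t_sol_t_over_phi M_def)
  qed
  moreover have "Z \<le> M" by (simp add: M_def)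
  ultimately show "\<exists>R. \<forall>r\<ge>R. Z \<le> t_sol \<phi> r"
    by (meson order_trans)
qed

lemma DERIV_nonpos:
  assumes "(\<phi> has_real_derivative D) (at t)" and "0 \<le> t"
  shows "D \<le> 0"
proof (rule ccontr)
  assume "\<not> D \<le> 0"
  then obtain d where "0 < d" "\<And>h. 0 < h \<Longrightarrow> h < d \<Longrightarrow> \<phi> t < \<phi> (t + h)"
    using DERIV_pos_inc_right[OF assms(1)] by force
  then have "\<phi> t < \<phi> (t + d/2)" by simp
  moreover have "\<phi> (t + d/2) \<le> \<phi> t" using decreasing \<open>0 < d\<close> \<open>0 \<le> t\<close> by simp
  ultimately show False by simp
qed

lemma t_over_phi_has_pos_derivative:
  assumes "\<phi> differentiable (at t)" and "0 \<le> t"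
  obtains E where "0 < E" and "((\<lambda>t. t / \<phi> t) has_real_derivative E) (at t)"
proof -
  obtain D where D: "(\<phi> has_real_derivative D) (at t)"
    using assms(1) real_differentiable_def by blast
  have "0 < \<phi> t" using pos \<open>0 \<le> t\<close> by simp
  then have "((\<lambda>t. t / \<phi> t) has_real_derivative (1 * \<phi> t - t * D) / (\<phi> t * \<phi> t)) (at t)"
    by (intro DERIV_divide DERIV_ident D) auto
  moreover have "t * D \<le> 0"
    using DERIV_nonpos[OF D \<open>0 \<le> t\<close>] \<open>0 \<le> t\<close> by (simp add: mult_nonneg_nonpos)
  then have "0 < (1 * \<phi> t - t * D) / (\<phi> t * \<phi> t)"
    using \<open>0 < \<phi> t\<close> by simp
  ultimately show ?thesis using that by blast
qed

lemma t_sol_differentiable: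
  assumes cont: "continuous_on {0..} \<phi>"
    and diff: "\<And>x. 0 < x \<Longrightarrow> \<phi> differentiable (at x)"
    and "0 < r"
  shows "t_sol \<phi> differentiable (at r)"
proof -
  define x where "x = t_sol \<phi> r"
  have "0 \<le> x" "x / \<phi> x = r" using t_sol_eq[OF cont] \<open>0 < r\<close> by (auto simp: x_def)
  then have "0 < x" using \<open>0 < r\<close> by (cases "x = 0") auto
  have "isCont (t_sol \<phi>) (x / \<phi> x)"
  proof (rule isCont_inverse_function[where f = "\<lambda>t. t / \<phi> t" and x = x and d = "x/2"])
    fix z assume "\<bar>z - x\<bar> \<le> x/2"
    then have "0 < z" using \<open>0 < x\<close> by linarith
    then show "t_sol \<phi> (z / \<phi> z) = z" by (simp add: t_sol_t_over_phi)
    from \<open>0 < z\<close> obtain E where "((\<lambda>t. t / \<phi> t) has_real_derivative E) (at z)"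
      using t_over_phi_has_pos_derivative[OF diff] by (metis less_imp_le)
    then show "isCont (\<lambda>t. t / \<phi> t) z" by (rule DERIV_isCont)
  qed (use \<open>0 < x\<close> in simp)
  moreover obtain E where "0 < E" and E: "((\<lambda>t. t / \<phi> t) has_real_derivative E) (at x)"
    using t_over_phi_has_pos_derivative[OF diff[OF \<open>0 < x\<close>]] \<open>0 < x\<close> by auto
  ultimately have "(t_sol \<phi> has_real_derivative inverse E) (at r)"
    using \<open>x / \<phi> x = r\<close> \<open>0 < r\<close> t_sol_eq[OF cont]
    by (intro DERIV_inverse_function[where a = 0 and b = "r + 1"]) (auto simp: x_def)
  then show ?thesis using real_differentiable_def by blast
qed

lemma phi_tilde_le:
  assumes "0 \<le> r" and "0 < c" and fixed: "\<phi> (c ^ (2*n+1) * r) = c ^ (2*n+1)"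
  shows "phi_tilde n \<phi> r \<le> 2 * c"
proof -
  let ?F = "\<lambda>\<delta>. \<delta> + \<phi> (\<delta> ^ (2*n+1) * r) / \<delta> ^ (2*n)"
  have "?F \<delta> \<ge> 0" if "0 < \<delta>" for \<delta>
  proof -
    have "0 < \<phi> (\<delta> ^ (2*n+1) * r)" using pos that \<open>0 \<le> r\<close> by simp
    with that show ?thesis by simp
  qed
  then have "bdd_below (?F ` {0<..})" by (intro bdd_belowI[of _ 0]) auto
  moreover have "?F c = 2 * c"
    using fixed \<open>0 < c\<close> by (simp add: power_add)
  ultimately show ?thesis
    unfolding phi_tilde_def using cINF_lower[of ?F "{0<..}" c] \<open>0 < c\<close> by simp
qed

lemma phi_tilde_ge:
  assumes "0 \<le> r" and "0 < c" and fixed: "\<phi> (c ^ (2*n+1) * r) = c ^ (2*n+1)"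
  shows "c \<le> phi_tilde n \<phi> r"
  unfolding phi_tilde_def
proof (rule cINF_greatest)
  fix \<delta> :: real assume "\<delta> \<in> {0<..}"
  then have "0 < \<delta>" by simp
  show "c \<le> \<delta> + \<phi> (\<delta> ^ (2*n+1) * r) / \<delta> ^ (2*n)"
  proof (cases "c \<le> \<delta>")
    case True
    have "0 < \<phi> (\<delta> ^ (2*n+1) * r)" using pos \<open>0 < \<delta>\<close> \<open>0 \<le> r\<close> by simp
    with True \<open>0 < \<delta>\<close> show ?thesis by (simp add: add_increasing2)
  next
    case False
    have "\<delta> ^ (2*n+1) * r \<le> c ^ (2*n+1) * r"
      using False \<open>0 < \<delta>\<close> \<open>0 \<le> r\<close> by (intro mult_right_mono power_mono) auto
    then have "c ^ (2*n+1) \<le> \<phi> (\<delta> ^ (2*n+1) * r)"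
      using decreasing[of "\<delta> ^ (2*n+1) * r" "c ^ (2*n+1) * r"] \<open>0 < \<delta>\<close> \<open>0 \<le> r\<close>
      unfolding fixed by simp
    moreover have "c * \<delta> ^ (2*n) \<le> c ^ (2*n+1)"
      using False \<open>0 < \<delta>\<close> \<open>0 < c\<close> by (simp add: mult_left_mono power_mono)
    ultimately have "c * \<delta> ^ (2*n) \<le> \<phi> (\<delta> ^ (2*n+1) * r)" by linarith
    then have "c \<le> \<phi> (\<delta> ^ (2*n+1) * r) / \<delta> ^ (2*n)"
      using \<open>0 < \<delta>\<close> by (simp add: le_divide_eq)
    with \<open>0 < \<delta>\<close> show ?thesis by simp
  qed
qed auto

lemma phi_tilde_t_over_phi_bounds:
  assumes "0 \<le> T"
  shows "\<phi> T powr (1 / real (2*n+1)) \<le> phi_tilde n \<phi> (T / \<phi> T)"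
    and "phi_tilde n \<phi> (T / \<phi> T) \<le> 2 * \<phi> T powr (1 / real (2*n+1))"
proof -
  define c where "c = \<phi> T powr (1 / real (2*n+1))"
  have "0 < \<phi> T" using pos[OF assms] .
  then have "0 < c" by (simp add: c_def)
  have "c ^ (2*n+1) = \<phi> T powr (1 / real (2*n+1) * real (2*n+1))"
    unfolding c_def using \<open>0 < \<phi> T\<close> by (simp only: powr_realpow[symmetric] powr_powr powr_gt_zero)
  then have "c ^ (2*n+1) = \<phi> T" using \<open>0 < \<phi> T\<close> by simp
  then have "\<phi> (c ^ (2*n+1) * (T / \<phi> T)) = c ^ (2*n+1)"
    using \<open>0 < \<phi> T\<close> by simp
  moreover have "0 \<le> T / \<phi> T" using assms \<open>0 < \<phi> T\<close> by simp
  ultimately show "c \<le> phi_tilde n \<phi> (T / \<phi> T)" and "phi_tilde n \<phi> (T / \<phi> T) \<le> 2 * c"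
    using phi_tilde_ge phi_tilde_le \<open>0 < c\<close> by auto
qed

end

theorem lemma2:
  fixes n :: nat and \<phi> :: "real \<Rightarrow> real"
  assumes n: "n \<ge> 1"
    and diff: "\<forall>x\<ge>0. \<phi> differentiable (at x within {0..})"
    and pos: "\<forall>x\<ge>0. \<phi> x > 0"
    and decr: "\<forall>x y. 0 \<le> x \<longrightarrow> x \<le> y \<longrightarrow> \<phi> y \<le> \<phi> x"
    and lim: "(\<phi> \<longlongrightarrow> 0) at_top"
  shows "(\<forall>r>0. \<exists>!t. t \<ge> 0 \<and> t / \<phi> t = r)
     \<and> (\<forall>r>0. t_sol \<phi> differentiable (at r))
     \<and> strict_mono_on {0<..} (t_sol \<phi>)
     \<and> filterlim (t_sol \<phi>) at_top at_top
     \<and> (\<forall>r>0. \<phi> (t_sol \<phi> r) powr (1 / real (2*n+1)) \<le> phi_tilde n \<phi> r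
              \<and> phi_tilde n \<phi> r \<le> 2 * \<phi> (t_sol \<phi> r) powr (1 / real (2*n+1)))"
proof -
  interpret positive_decreasing \<phi> using pos decr by unfold_locales auto
  have cont: "continuous_on {0..} \<phi>"
    using diff differentiable_imp_continuous_within continuous_on_eq_continuous_within
    by (metis atLeast_iff)
  have diff_at: "\<phi> differentiable (at x)" if "0 < x" for x
    using diff at_within_interior[of x "{0..}"] that
    by (metis interior_real_atLeast greaterThan_iff less_imp_le)
  have "\<phi> (t_sol \<phi> r) powr (1 / real (2*n+1)) \<le> phi_tilde n \<phi> r
      \<and> phi_tilde n \<phi> r \<le> 2 * \<phi> (t_sol \<phi> r) powr (1 / real (2*n+1))" if "0 \<le> r" for r
    using phi_tilde_t_over_phi_bounds[OF t_sol_eq(1)[OF cont that], of n]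
    unfolding t_sol_eq(2)[OF cont that] by simp
  moreover have "strict_mono_on {0<..} (t_sol \<phi>)"
    by (rule monotone_on_subset[OF strict_mono_on_t_sol[OF cont]]) auto
  ultimately show ?thesis
    using ex1_t_over_phi_eq[OF cont] t_sol_differentiable[OF cont diff_at]
      filterlim_t_sol_at_top[OF cont] by auto
qed

end
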